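(* For any $0<r<\log 1.01$ and any $s\in\mathbb{R}$ with $6r\le|s|\le\log 1.9$, we have $a_sK_r\cap K_r=\varnothing$.
   Context: $X=\mathrm{SL}_2(\mathbb{R})/\mathrm{SL}_2(\mathbb{Z})$ is the space of unimodular lattices in $\mathbb{R}^2$. $\|\cdot\|$ is the supremum norm on $\mathbb{R}^2$. For $\Lambda\in X$ let $\Delta(\Lambda)=\sup_{v\in\Lambda\smallsetminus\{0\}}\log(1/\|v\|)$, and for $r\ge0$ let $K_r=\Delta^{-1}([0,r])$. $a_s=\mathrm{diag}(e^s,e^{-s})$ acts on $X$ by left multiplication. *)

theory Defs
  imports "HOL-Analysis.Analysis"
begin

definition supnorm :: "real \<times> real \<Rightarrow> real" where
  "supnorm v = max \<bar>fst v\<bar> \<bar>snd v\<bar>"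

text \<open>The lattice g Z^2 spanned by the columns u, v of g.\<close>
definition lattice_of :: "real \<times> real \<Rightarrow> real \<times> real \<Rightarrow> (real \<times> real) set" where
  "lattice_of u v = {(of_int m * fst u + of_int n * fst v, of_int m * snd u + of_int n * snd v) | m n :: int. True}"

text \<open>X = SL_2(R)/SL_2(Z): the unimodular lattices g Z^2 with det g = 1.\<close>
definition unimodular_lattices :: "(real \<times> real) set set" where
  "unimodular_lattices = {lattice_of u v | u v. fst u * snd v - fst v * snd u = 1}"

definition Delta :: "(real \<times> real) set \<Rightarrow> real" where
  "Delta L = (SUP v \<in> L - {(0,0)}. ln (1 / supnorm v))"

definition K :: "real \<Rightarrow> (real \<times> real) set set" where
  "K r = {L \<in> unimodular_lattices. Delta L \<le> r}"

definition a_act :: "real \<Rightarrow> real \<times> real \<Rightarrow> real \<times> real" where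
  "a_act s v = (exp s * fst v, exp (- s) * snd v)"

end

theory Submission
  imports Defs
begin

(* If L and a_s L both lie in K_r, every nonzero vector of L has sup-norm at least
   d = e^-r, before and after applying a_s.  For s >= 0 and t = e^s, the hexagon with
   vertices (0, +-theta d t) and (+-theta d, +-theta d t (2 - t)), 0 < theta < 1, lies in the
   union of the open boxes |x|, |y| < d and |x| < d/t, |y| < d t, i.e. it consists of vectors
   that are short before or after a_s.  Its area 2 theta^2 d^2 t (3 - t) exceeds 4 for theta
   close to 1 as soon as d^2 t (3 - t) > 2, which for the given ranges of r and s is an
   elementary numerical inequality; Minkowski's convex body theorem then puts a nonzero
   lattice vector into the hexagon.  The case s < 0 follows by swapping the coordinates. *)

section \<open>Blichfeldt's lemma and Minkowski's convex body theorem\<close>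

definition int_point :: "int^'n \<Rightarrow> real^'n" where
  "int_point k = (\<chi> i. of_int (k$i))"

definition unit_cell :: "int^'n \<Rightarrow> (real^'n) set" where
  "unit_cell k = {z. \<forall>i. of_int (k$i) \<le> z$i \<and> z$i < of_int (k$i) + 1}"

lemma unit_cell_sets:
  fixes k :: "int^'n"
  shows "unit_cell k \<in> sets lebesgue"
proof -
  have "{z::real^'n. of_int (k$i) \<le> z$i \<and> z$i < of_int (k$i) + 1} \<in> sets borel" for i
  proof -
    have "closed {z::real^'n. of_int (k$i) \<le> z$i}" "open {z::real^'n. z$i < of_int (k$i) + 1}"
      by (intro closed_Collect_le open_Collect_less continuous_intros)+
    then show ?thesis by (simp add: Collect_conj_eq sets.Int borel_closed borel_open)
  qed
  then have "unit_cell k \<in> sets borel"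
    unfolding unit_cell_def Collect_all_eq by (intro sets.finite_INT) auto
  then show ?thesis by simp
qed

lemma finite_int_vectors_bounded: "finite {k::int^'n. \<forall>i. \<bar>k$i\<bar> \<le> N}"
proof (rule finite_subset)
  show "{k::int^'n. \<forall>i. \<bar>k$i\<bar> \<le> N} \<subseteq> vec_lambda ` (\<Pi>\<^sub>E i\<in>UNIV. {-N..N})"
    by (force simp: PiE_iff abs_le_iff intro: image_eqI[of _ _ "vec_nth _"])
qed (intro finite_imageI finite_PiE; simp)

lemma bounded_subset_finite_unit_cells:
  fixes A :: "(real^'n) set"
  assumes "bounded A"
  obtains I where "finite I" and "A \<subseteq> (\<Union>k\<in>I. unit_cell k)"
proof -
  obtain B where B: "\<And>x. x \<in> A \<Longrightarrow> norm x \<le> B"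
    using \<open>bounded A\<close> bounded_iff by blast
  define I where "I = {k::int^'n. \<forall>i. \<bar>k$i\<bar> \<le> \<lceil>B\<rceil> + 1}"
  have "A \<subseteq> (\<Union>k\<in>I. unit_cell k)"
  proof
    fix x assume "x \<in> A"
    define k where "k = (\<chi> i. \<lfloor>x$i\<rfloor>)"
    have bound: "\<bar>x$i\<bar> \<le> B" for i
      using B[OF \<open>x \<in> A\<close>] component_le_norm_cart order_trans by blast
    have "\<bar>\<lfloor>x$i\<rfloor>\<bar> \<le> \<lceil>B\<rceil> + 1" for i
      using bound[of i] unfolding abs_le_iff by (intro conjI; linarith)
    then have "k \<in> I"
      by (simp add: I_def k_def)
    moreover have "x \<in> unit_cell k"
      by (simp add: unit_cell_def k_def)
    ultimately show "x \<in> (\<Union>k\<in>I. unit_cell k)"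
      by blast
  qed
  moreover have "finite I"
    unfolding I_def by (rule finite_int_vectors_bounded)
  ultimately show ?thesis
    using that by blast
qed

lemma measure_unit_cube_cart: "measure lebesgue (cbox 0 (1::real^'n)) = 1"
proof -
  have "(0::real^'n) \<in> cbox 0 1" by (simp add: mem_box_cart)
  then have "cbox 0 (1::real^'n) \<noteq> {}" by blast
  then show ?thesis by (simp add: measure_completion content_cbox_cart)
qed

lemma integer_translates_meet:
  fixes S :: "(real^'n) set"
  assumes "k \<noteq> l" and "z \<in> (\<lambda>x. x - int_point k) ` S" and "z \<in> (\<lambda>x. x - int_point l) ` S"
  shows "\<exists>x\<in>S. \<exists>y\<in>S. x \<noteq> y \<and> (\<forall>i. (x - y)$i \<in> \<int>)"
proof -
  obtain x y where "x \<in> S" "y \<in> S" and "x - int_point k = y - int_point l"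
    using assms(2,3) by blast
  then have "x - y = int_point k - int_point l"
    by (simp add: algebra_simps)
  then have diff: "(x - y)$i = of_int (k$i - l$i)" for i
    by (simp add: int_point_def)
  moreover have "x \<noteq> y"
  proof
    assume "x = y"
    then have "k$i = l$i" for i
      using diff[of i] by simp
    then show False
      using \<open>k \<noteq> l\<close> by (simp add: vec_eq_iff)
  qed
  ultimately show ?thesis
    using \<open>x \<in> S\<close> \<open>y \<in> S\<close> by (metis Ints_of_int)
qed

lemma Blichfeldt:
  fixes A :: "(real^'n) set"
  assumes "A \<in> lmeasurable" and "bounded A" and "1 < measure lebesgue A"
  shows "\<exists>x\<in>A. \<exists>y\<in>A. x \<noteq> y \<and> (\<forall>i. (x - y)$i \<in> \<int>)"
proof (rule ccontr)
  assume no_pair: "\<not> ?thesis"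
  obtain I where "finite I" and "A \<subseteq> (\<Union>k\<in>I. unit_cell k)"
    using bounded_subset_finite_unit_cells[OF \<open>bounded A\<close>] by blast
  define piece where "piece k = (\<lambda>z. z - int_point k) ` (A \<inter> unit_cell k)" for k
  have cell_part: "A \<inter> unit_cell k \<in> lmeasurable" for k
    using \<open>A \<in> lmeasurable\<close> unit_cell_sets by (rule fmeasurable_Int_fmeasurable)
  have piece: "piece k \<in> lmeasurable" "measure lebesgue (piece k) = measure lebesgue (A \<inter> unit_cell k)" for k
    unfolding piece_def using cell_part by (simp_all add: measurable_translation_subtract measure_translation_subtract)
  have "A = (\<Union>k\<in>I. A \<inter> unit_cell k)"
    using \<open>A \<subseteq> (\<Union>k\<in>I. unit_cell k)\<close> by blast
  then have "measure lebesgue A \<le> (\<Sum>k\<in>I. measure lebesgue (A \<inter> unit_cell k))"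
    using measure_UNION_le[OF \<open>finite I\<close>, of "\<lambda>k. A \<inter> unit_cell k" lebesgue] cell_part
    by (metis fmeasurableD)
  also have "\<dots> = (\<Sum>k\<in>I. measure lebesgue (piece k))"
    by (simp add: piece)
  also have "\<dots> = measure lebesgue (\<Union>k\<in>I. piece k)"
  proof (rule measure_UNION'[symmetric])
    show "pairwise (\<lambda>k l. disjnt (piece k) (piece l)) I"
    proof (rule pairwiseI, unfold disjnt_iff, intro allI notI)
      fix k l z assume "k \<noteq> l" and "z \<in> piece k \<and> z \<in> piece l"
      then have "z \<in> (\<lambda>z. z - int_point k) ` A" "z \<in> (\<lambda>z. z - int_point l) ` A"
        unfolding piece_def by auto
      then show False
        using integer_translates_meet[OF \<open>k \<noteq> l\<close>] no_pair by blast
    qed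
  qed (use piece \<open>finite I\<close> in auto)
  also have "\<dots> \<le> measure lebesgue (cbox 0 (1::real^'n))"
  proof (rule measure_mono_fmeasurable)
    show "(\<Union>k\<in>I. piece k) \<subseteq> cbox 0 1"
    proof
      fix z assume "z \<in> (\<Union>k\<in>I. piece k)"
      then obtain k x where "x \<in> unit_cell k" "z = x - int_point k"
        unfolding piece_def by blast
      then show "z \<in> cbox 0 1"
        by (simp add: unit_cell_def int_point_def mem_box_cart) (metis add.commute less_eq_real_def diff_le_eq)
    qed
    show "(\<Union>k\<in>I. piece k) \<in> sets lebesgue"
      using piece \<open>finite I\<close> by (auto intro: fmeasurableD)
  qed auto
  finally show False
    using \<open>1 < measure lebesgue A\<close> measure_unit_cube_cart[where 'n='n] by linarith
qed

lemma Minkowski_convex_body: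
  fixes H :: "(real^'n) set"
  assumes "convex H" and symmetric: "\<And>x. x \<in> H \<Longrightarrow> -x \<in> H" and "bounded H"
    and "2 ^ CARD('n) < measure lebesgue H"
  shows "\<exists>z\<in>H. z \<noteq> 0 \<and> (\<forall>i. z$i \<in> \<int>)"
proof -
  define A where "A = (\<lambda>x. (1/2) *\<^sub>R x) ` H"
  have "convex A" "bounded A"
    unfolding A_def using \<open>convex H\<close> \<open>bounded H\<close> by (simp_all add: convex_scaling bounded_scaling)
  then have "A \<in> lmeasurable"
    by (rule measurable_convex)
  have "measure lebesgue A = measure lebesgue H / 2 ^ CARD('n)"
    using measure_lebesgue_affine[of "1/2" 0 H] by (simp add: A_def power_one_over)
  then have "1 < measure lebesgue A"
    using \<open>2 ^ CARD('n) < measure lebesgue H\<close> by simp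
  then obtain x y where "x \<in> A" "y \<in> A" "x \<noteq> y" and integral: "\<forall>i. (x - y)$i \<in> \<int>"
    using Blichfeldt[OF \<open>A \<in> lmeasurable\<close> \<open>bounded A\<close>] by blast
  then obtain p q where "p \<in> H" "q \<in> H" "x = (1/2) *\<^sub>R p" "y = (1/2) *\<^sub>R q"
    unfolding A_def by blast
  then have "x - y = (1/2) *\<^sub>R p + (1/2) *\<^sub>R (-q)"
    by (simp add: scaleR_diff_right)
  also have "\<dots> \<in> H"
    using \<open>convex H\<close> \<open>p \<in> H\<close> symmetric[OF \<open>q \<in> H\<close>] by (intro convexD) auto
  finally show ?thesis
    using \<open>x \<noteq> y\<close> integral by (intro bexI[of _ "x - y"]) auto
qed

lemma Minkowski_lattice:
  fixes H :: "(real^'n::{finite,wellorder}) set" and M :: "real^'n::_^'n::_"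
  assumes "convex H" and symmetric: "\<And>x. x \<in> H \<Longrightarrow> -x \<in> H" and "bounded H"
    and "det M \<noteq> 0" and big: "2 ^ CARD('n) * \<bar>det M\<bar> < measure lebesgue H"
  shows "\<exists>z. z \<noteq> 0 \<and> (\<forall>i. z$i \<in> \<int>) \<and> M *v z \<in> H"
proof -
  obtain N where "M ** N = mat 1"
    using \<open>det M \<noteq> 0\<close> invertible_det_nz invertible_right_inverse by blast
  then have M_N: "M *v (N *v x) = x" for x
    by (simp add: matrix_vector_mul_assoc)
  define A where "A = (\<lambda>x. N *v x) ` H"
  have "convex A" "bounded A"
    unfolding A_def using \<open>convex H\<close> \<open>bounded H\<close>
    by (simp_all add: convex_linear_image bounded_linear_image linear_conv_bounded_linear)
  have "H = (\<lambda>z. M *v z) ` A"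
    unfolding A_def image_image M_N by simp
  then have "measure lebesgue H = \<bar>det M\<bar> * measure lebesgue A"
    using measure_linear_image[of "\<lambda>z. M *v z" A] measurable_convex[OF \<open>convex A\<close> \<open>bounded A\<close>]
    by simp
  then have "2 ^ CARD('n) < measure lebesgue A"
    using big \<open>det M \<noteq> 0\<close> by (simp add: mult.commute)
  moreover have "-z \<in> A" if "z \<in> A" for z
  proof -
    obtain x where "x \<in> H" "z = N *v x"
      using \<open>z \<in> A\<close> A_def by blast
    then have "-z = N *v (-x)"
      by (simp add: linear_neg[OF matrix_vector_mul_linear])
    then show ?thesis
      using symmetric[OF \<open>x \<in> H\<close>] A_def by blast
  qed
  ultimately obtain z where "z \<in> A" "z \<noteq> 0" "\<forall>i. z$i \<in> \<int>"
    using Minkowski_convex_body[OF \<open>convex A\<close> _ \<open>bounded A\<close>] by blast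
  then show ?thesis
    using \<open>H = (\<lambda>z. M *v z) ` A\<close> by blast
qed

section \<open>A hexagon of short vectors\<close>

lemma convex_weighted_abs_le:
  fixes f g :: "'a::real_vector \<Rightarrow> real"
  assumes "linear f" "linear g" "0 \<le> p" "0 \<le> q"
  shows "convex {x. p * \<bar>f x\<bar> + q * \<bar>g x\<bar> \<le> c}"
proof (rule convexI, clarsimp)
  fix x y :: 'a and u v :: real
  assume x: "p * \<bar>f x\<bar> + q * \<bar>g x\<bar> \<le> c" and y: "p * \<bar>f y\<bar> + q * \<bar>g y\<bar> \<le> c"
    and "0 \<le> u" "0 \<le> v" "u + v = 1"
  have convex_abs: "\<bar>h (u *\<^sub>R x + v *\<^sub>R y)\<bar> \<le> u * \<bar>h x\<bar> + v * \<bar>h y\<bar>" if "linear h" for h :: "'a \<Rightarrow> real"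
    using \<open>0 \<le> u\<close> \<open>0 \<le> v\<close> abs_triangle_ineq[of "u * h x" "v * h y"]
    by (simp add: linear_add[OF that] linear_scale[OF that] abs_mult)
  have "p * \<bar>f (u *\<^sub>R x + v *\<^sub>R y)\<bar> + q * \<bar>g (u *\<^sub>R x + v *\<^sub>R y)\<bar>
      \<le> p * (u * \<bar>f x\<bar> + v * \<bar>f y\<bar>) + q * (u * \<bar>g x\<bar> + v * \<bar>g y\<bar>)"
    using assms convex_abs by (intro add_mono mult_left_mono) auto
  also have "\<dots> = u * (p * \<bar>f x\<bar> + q * \<bar>g x\<bar>) + v * (p * \<bar>f y\<bar> + q * \<bar>g y\<bar>)"
    by (simp add: algebra_simps)
  also have "\<dots> \<le> u * c + v * c"
    using x y \<open>0 \<le> u\<close> \<open>0 \<le> v\<close> by (intro add_mono mult_left_mono)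
  also have "\<dots> = c"
    using \<open>u + v = 1\<close> by (simp add: distrib_right[symmetric])
  finally show "p * \<bar>f (u *\<^sub>R x + v *\<^sub>R y)\<bar> + q * \<bar>g (u *\<^sub>R x + v *\<^sub>R y)\<bar> \<le> c" .
qed

(* The centrally symmetric hexagon with vertices (0, +-b) and (+-a, +-h). *)
definition hexagon :: "real \<Rightarrow> real \<Rightarrow> real \<Rightarrow> (real^2) set" where
  "hexagon a b h = {z. \<bar>z$1\<bar> \<le> a \<and> (b - h) * \<bar>z$1\<bar> + a * \<bar>z$2\<bar> \<le> a * b}"

lemma uminus_in_hexagon: "z \<in> hexagon a b h \<Longrightarrow> -z \<in> hexagon a b h"
  by (simp add: hexagon_def)

lemma convex_hexagon:
  assumes "0 \<le> a" "h \<le> b"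
  shows "convex (hexagon a b h)"
proof -
  have "linear (\<lambda>z::real^2. z$i)" for i
    using bounded_linear_vec_nth by (rule bounded_linear.linear)
  then have "convex {z::real^2. 1 * \<bar>z$1\<bar> + 0 * \<bar>z$2\<bar> \<le> a}"
    and "convex {z::real^2. (b - h) * \<bar>z$1\<bar> + a * \<bar>z$2\<bar> \<le> a * b}"
    using assms by (intro convex_weighted_abs_le; simp)+
  then have "convex ({z::real^2. 1 * \<bar>z$1\<bar> + 0 * \<bar>z$2\<bar> \<le> a} \<inter> {z. (b - h) * \<bar>z$1\<bar> + a * \<bar>z$2\<bar> \<le> a * b})"
    by (rule convex_Int)
  then show ?thesis
    by (simp add: hexagon_def Collect_conj_eq)
qed

lemma bounded_hexagon:
  assumes "0 < a" "h \<le> b"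
  shows "bounded (hexagon a b h)"
proof -
  have "norm z \<le> a + b" if "z \<in> hexagon a b h" for z
  proof -
    have "\<bar>z$1\<bar> \<le> a" "(b - h) * \<bar>z$1\<bar> + a * \<bar>z$2\<bar> \<le> a * b"
      using that by (simp_all add: hexagon_def)
    moreover have "0 \<le> (b - h) * \<bar>z$1\<bar>"
      using assms by simp
    ultimately have "a * \<bar>z$2\<bar> \<le> a * b"
      by linarith
    then have "\<bar>z$2\<bar> \<le> b"
      using \<open>0 < a\<close> by simp
    then show ?thesis
      using \<open>\<bar>z$1\<bar> \<le> a\<close> norm_le_l1_cart[of z] by (simp add: sum_2)
  qed
  then show ?thesis
    unfolding bounded_iff by blast
qed

lemma negligible_horizontal_line: "negligible {z::real^2. z$2 = c}"
  using negligible_hyperplane[of "axis 2 (1::real)" c]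
  by (simp add: cart_eq_inner_axis inner_commute axis_eq_0_iff)

lemma hexagon_decomposition:
  assumes "0 < a" "0 \<le> h" "h \<le> b"
  shows "cbox (vector [-a, -h]) (vector [a, h]) \<subseteq> hexagon a b h \<inter> {z. \<bar>z$2\<bar> \<le> h}"
    and "convex hull {vector [a, h], vector [-a, h], vector [0, b]} \<subseteq> hexagon a b h \<inter> {z. h \<le> z$2}"
    and "convex hull {vector [a, -h], vector [-a, -h], vector [0, -b]} \<subseteq> hexagon a b h \<inter> {z. z$2 \<le> -h}"
proof -
  show "cbox (vector [-a, -h]) (vector [a, h]) \<subseteq> hexagon a b h \<inter> {z. \<bar>z$2\<bar> \<le> h}"
  proof
    fix z :: "real^2" assume "z \<in> cbox (vector [-a, -h]) (vector [a, h])"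
    then have z: "\<bar>z$1\<bar> \<le> a" "\<bar>z$2\<bar> \<le> h"
      by (auto simp: mem_box_cart forall_2)
    then have "(b - h) * \<bar>z$1\<bar> + a * \<bar>z$2\<bar> \<le> (b - h) * a + a * h"
      using assms by (intro add_mono mult_left_mono) auto
    then show "z \<in> hexagon a b h \<inter> {z. \<bar>z$2\<bar> \<le> h}"
      using z by (auto simp: hexagon_def algebra_simps)
  qed
  have half_plane: "convex {z::real^2. c \<le> z$2}" "convex {z::real^2. z$2 \<le> c}" for c
    using convex_halfspace_ge[of c "axis 2 1"] convex_halfspace_le[of "axis 2 1" c]
    by (simp_all add: cart_eq_inner_axis inner_commute)
  have "convex (hexagon a b h)"
    using assms by (simp add: convex_hexagon)
  moreover have "vector [a, h] \<in> hexagon a b h" "vector [-a, h] \<in> hexagon a b h"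
    "vector [0, b] \<in> hexagon a b h" "vector [a, -h] \<in> hexagon a b h"
    "vector [-a, -h] \<in> hexagon a b h" "vector [0, -b] \<in> hexagon a b h"
    using assms by (auto simp: hexagon_def algebra_simps)
  ultimately show "convex hull {vector [a, h], vector [-a, h], vector [0, b]} \<subseteq> hexagon a b h \<inter> {z. h \<le> z$2}"
    and "convex hull {vector [a, -h], vector [-a, -h], vector [0, -b]} \<subseteq> hexagon a b h \<inter> {z. z$2 \<le> -h}"
    using assms by (intro hull_minimal convex_Int half_plane; simp)+
qed

lemma measure_hexagon_ge:
  assumes "0 < a" "0 \<le> h" "h \<le> b"
  shows "2 * a * (b + h) \<le> measure lebesgue (hexagon a b h)"
proof -
  define R :: "(real^2) set" where "R = cbox (vector [-a, -h]) (vector [a, h])"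
  define T\<^sub>1 :: "(real^2) set" where "T\<^sub>1 = convex hull {vector [a, h], vector [-a, h], vector [0, b]}"
  define T\<^sub>2 :: "(real^2) set" where "T\<^sub>2 = convex hull {vector [a, -h], vector [-a, -h], vector [0, -b]}"
  note pieces = hexagon_decomposition[OF assms, folded R_def T\<^sub>1_def T\<^sub>2_def]
  have "compact R" "compact T\<^sub>1" "compact T\<^sub>2"
    unfolding R_def T\<^sub>1_def T\<^sub>2_def by (auto intro: finite_imp_compact_convex_hull)
  have "vector [-a, -h] \<in> R"
    using assms by (auto simp: R_def mem_box_cart forall_2)
  then have "R \<noteq> {}"
    by blast
  then have "measure lebesgue R = 4 * a * h"
    by (simp add: R_def measure_completion content_cbox_cart UNIV_2)
  moreover have "measure lebesgue T\<^sub>1 = a * (b - h)" "measure lebesgue T\<^sub>2 = a * (b - h)"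
    using assms \<open>compact T\<^sub>1\<close> \<open>compact T\<^sub>2\<close> unfolding T\<^sub>1_def T\<^sub>2_def
    by (simp_all add: measure_completion compact_imp_closed content_triangle abs_mult)
  moreover have "negligible (R \<inter> T\<^sub>1)" "negligible (R \<inter> T\<^sub>2)" "negligible (T\<^sub>1 \<inter> T\<^sub>2)"
  proof -
    show "negligible (R \<inter> T\<^sub>1)"
      by (rule negligible_subset[OF negligible_horizontal_line[of h]]) (use pieces in force)
    show "negligible (R \<inter> T\<^sub>2)"
      by (rule negligible_subset[OF negligible_horizontal_line[of "-h"]]) (use pieces in force)
    show "negligible (T\<^sub>1 \<inter> T\<^sub>2)"
      by (rule negligible_subset[OF negligible_horizontal_line[of 0]]) (use pieces \<open>0 \<le> h\<close> in force)
  qed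
  ultimately have "2 * a * (b + h) = measure lebesgue (R \<union> T\<^sub>1 \<union> T\<^sub>2)"
    using measure_Un3_negligible[of R T\<^sub>1 T\<^sub>2] \<open>compact R\<close> \<open>compact T\<^sub>1\<close> \<open>compact T\<^sub>2\<close>
    by (simp add: lmeasurable_compact algebra_simps)
  also have "\<dots> \<le> measure lebesgue (hexagon a b h)"
  proof (rule measure_mono_fmeasurable)
    show "R \<union> T\<^sub>1 \<union> T\<^sub>2 \<subseteq> hexagon a b h"
      using pieces by blast
    show "R \<union> T\<^sub>1 \<union> T\<^sub>2 \<in> sets lebesgue"
      using \<open>compact R\<close> \<open>compact T\<^sub>1\<close> \<open>compact T\<^sub>2\<close> by (intro fmeasurableD fmeasurable.Un lmeasurable_compact)
    show "hexagon a b h \<in> lmeasurable"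
      using assms by (simp add: convex_hexagon bounded_hexagon measurable_convex)
  qed
  finally show ?thesis .
qed

lemma hexagon_short_or_flowed_short:
  assumes "0 < d" "0 \<le> s" "exp s \<le> 2" "0 < \<theta>" "\<theta> < 1"
    and "z \<in> hexagon (\<theta> * d) (\<theta> * d * exp s) (\<theta> * d * exp s * (2 - exp s))"
  shows "supnorm (z$1, z$2) < d \<or> supnorm (a_act s (z$1, z$2)) < d"
proof -
  define t x y where "t = exp s" and "x = \<bar>z$1\<bar>" and "y = \<bar>z$2\<bar>"
  have "1 \<le> t" "0 \<le> x" "0 < \<theta> * d" "\<theta> * d < d"
    using assms by (simp_all add: t_def x_def)
  have "x \<le> \<theta> * d" and "\<theta> * d * (t * (t - 1) * x + y) \<le> \<theta> * d * (\<theta> * d * t)"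
    using assms(6) by (simp_all add: hexagon_def t_def x_def y_def algebra_simps)
  then have slanted: "t * (t - 1) * x + y \<le> \<theta> * d * t"
    using \<open>0 < \<theta> * d\<close> mult_le_cancel_left_pos by blast
  show ?thesis
  proof (cases "y < d")
    case True
    then have "supnorm (z$1, z$2) < d"
      using \<open>x \<le> \<theta> * d\<close> \<open>\<theta> * d < d\<close> by (simp add: supnorm_def x_def y_def)
    then show ?thesis ..
  next
    case False
    have "0 \<le> t * (t - 1) * x"
      using \<open>1 \<le> t\<close> \<open>0 \<le> x\<close> by simp
    moreover have "\<theta> * d * t < d * t"
      using \<open>\<theta> * d < d\<close> \<open>1 \<le> t\<close> by (simp add: mult_strict_right_mono)
    ultimately have "y < d * t"
      using slanted by linarith
    then have "inverse t * y < d"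
      using \<open>1 \<le> t\<close> by (simp add: field_simps)
    moreover have "t * x < d"
    proof (rule ccontr)
      assume "\<not> t * x < d"
      then have "(t - 1) * d \<le> (t - 1) * (t * x)"
        using \<open>1 \<le> t\<close> by (simp add: mult_left_mono)
      then have "t * d \<le> \<theta> * d * t"
        using slanted False by (simp add: algebra_simps)
      then show False
        using \<open>\<theta> * d < d\<close> \<open>1 \<le> t\<close> by simp
    qed
    ultimately have "supnorm (a_act s (z$1, z$2)) < d"
      by (simp add: supnorm_def a_act_def t_def x_def y_def abs_mult exp_minus)
    then show ?thesis ..
  qed
qed

section \<open>Short vectors of unimodular lattices\<close>

lemma lattice_coefficients:
  fixes m n :: real
  assumes "fst u * snd v - fst v * snd u = 1"
  shows "snd v * (m * fst u + n * fst v) - fst v * (m * snd u + n * snd v) = m"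
    and "fst u * (m * snd u + n * snd v) - snd u * (m * fst u + n * fst v) = n"
  using assms by algebra+

lemma supnorm_pos: "w \<noteq> (0, 0) \<Longrightarrow> 0 < supnorm w"
  by (cases w) (auto simp: supnorm_def max_def)

lemma supnorm_lattice_vector_ge:
  assumes "fst u * snd v - fst v * snd u = 1" and "w \<in> lattice_of u v" and "w \<noteq> (0, 0)"
  shows "1 \<le> (\<bar>fst u\<bar> + \<bar>snd u\<bar> + \<bar>fst v\<bar> + \<bar>snd v\<bar>) * supnorm w"
proof -
  obtain m n :: int where w: "w = (of_int m * fst u + of_int n * fst v, of_int m * snd u + of_int n * snd v)"
    using \<open>w \<in> lattice_of u v\<close> unfolding lattice_of_def by blast
  have "m \<noteq> 0 \<or> n \<noteq> 0"
    using \<open>w \<noteq> (0, 0)\<close> w by auto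
  then have "1 \<le> \<bar>real_of_int m\<bar> + \<bar>real_of_int n\<bar>"
    by linarith
  also have "\<dots> \<le> (\<bar>snd v\<bar> * \<bar>fst w\<bar> + \<bar>fst v\<bar> * \<bar>snd w\<bar>) + (\<bar>fst u\<bar> * \<bar>snd w\<bar> + \<bar>snd u\<bar> * \<bar>fst w\<bar>)"
    using lattice_coefficients[OF assms(1), of "of_int m" "of_int n"] w
    by (intro add_mono) (metis abs_mult abs_triangle_ineq4 fst_conv snd_conv)+
  also have "\<dots> \<le> (\<bar>snd v\<bar> * supnorm w + \<bar>fst v\<bar> * supnorm w) + (\<bar>fst u\<bar> * supnorm w + \<bar>snd u\<bar> * supnorm w)"
    by (intro add_mono mult_left_mono) (auto simp: supnorm_def)
  also have "\<dots> = (\<bar>fst u\<bar> + \<bar>snd u\<bar> + \<bar>fst v\<bar> + \<bar>snd v\<bar>) * supnorm w"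
    by (simp add: algebra_simps)
  finally show ?thesis .
qed

lemma ln_inverse_supnorm_le_Delta:
  assumes "L \<in> unimodular_lattices" and "w \<in> L" and "w \<noteq> (0, 0)"
  shows "ln (1 / supnorm w) \<le> Delta L"
proof -
  obtain u v where L: "L = lattice_of u v" and det: "fst u * snd v - fst v * snd u = 1"
    using \<open>L \<in> unimodular_lattices\<close> unfolding unimodular_lattices_def by blast
  define C where "C = \<bar>fst u\<bar> + \<bar>snd u\<bar> + \<bar>fst v\<bar> + \<bar>snd v\<bar>"
  have "ln (1 / supnorm z) \<le> ln C" if "z \<in> L - {(0, 0)}" for z
  proof -
    have "0 < supnorm z" "1 \<le> C * supnorm z"
      using that supnorm_pos supnorm_lattice_vector_ge[OF det] by (auto simp: L C_def)
    then have "1 / supnorm z \<le> C"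
      by (simp add: divide_le_eq mult.commute)
    then show ?thesis
      using \<open>0 < supnorm z\<close> by (intro ln_mono) auto
  qed
  then have "bdd_above ((\<lambda>z. ln (1 / supnorm z)) ` (L - {(0, 0)}))"
    by (intro bdd_aboveI) auto
  then show ?thesis
    unfolding Delta_def using assms by (intro cSUP_upper) auto
qed

lemma supnorm_ge_of_mem_K:
  assumes "L \<in> K r" and "w \<in> L" and "w \<noteq> (0, 0)"
  shows "exp (- r) \<le> supnorm w"
proof -
  have "0 < supnorm w"
    using \<open>w \<noteq> (0, 0)\<close> by (rule supnorm_pos)
  have "ln (1 / supnorm w) \<le> r"
    using assms ln_inverse_supnorm_le_Delta[of L w] by (auto simp: K_def)
  then have "- r \<le> ln (supnorm w)"
    using \<open>0 < supnorm w\<close> by (simp add: ln_div)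
  then show ?thesis
    using \<open>0 < supnorm w\<close> ln_ge_iff by blast
qed

lemma unimodular_lattice_meets_convex_body:
  fixes H :: "(real^2) set"
  assumes "L \<in> unimodular_lattices" and "convex H" and "\<And>x. x \<in> H \<Longrightarrow> -x \<in> H" and "bounded H"
    and "4 < measure lebesgue H"
  shows "\<exists>w\<in>L. w \<noteq> (0, 0) \<and> vector [fst w, snd w] \<in> H"
proof -
  obtain u v where L: "L = lattice_of u v" and det: "fst u * snd v - fst v * snd u = 1"
    using \<open>L \<in> unimodular_lattices\<close> unfolding unimodular_lattices_def by blast
  define M :: "real^2^2" where "M = vector [vector [fst u, fst v], vector [snd u, snd v]]"
  have "det M = 1"
    using det by (simp add: M_def det_2)
  then obtain z where "z \<noteq> 0" "\<forall>i. z$i \<in> \<int>" "M *v z \<in> H"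
    using Minkowski_lattice[of H M] assms by auto
  then obtain m n :: int where "z$1 = of_int m" "z$2 = of_int n"
    by (meson Ints_cases)
  define w where "w = (of_int m * fst u + of_int n * fst v, of_int m * snd u + of_int n * snd v)"
  have "M *v z = vector [fst w, snd w]"
    using \<open>z$1 = of_int m\<close> \<open>z$2 = of_int n\<close>
    by (simp add: w_def M_def matrix_vector_mult_def vec_eq_iff forall_2 sum_2 mult.commute)
  moreover have "w \<in> L"
    unfolding L lattice_of_def w_def by blast
  moreover have "w \<noteq> (0, 0)"
  proof
    assume "w = (0, 0)"
    then have "m = 0" "n = 0"
      using lattice_coefficients[OF det, of "of_int m" "of_int n"] by (auto simp: w_def)
    then show False
      using \<open>z \<noteq> 0\<close> \<open>z$1 = of_int m\<close> \<open>z$2 = of_int n\<close> by (simp add: vec_eq_iff forall_2)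
  qed
  ultimately show ?thesis
    using \<open>M *v z \<in> H\<close> by auto
qed

lemma unimodular_lattice_short_or_flowed_short_nonneg:
  assumes "L \<in> unimodular_lattices" and "0 < d" and "0 \<le> s" and "exp s \<le> 2"
    and "2 < d\<^sup>2 * exp s * (3 - exp s)"
  shows "\<exists>w\<in>L. w \<noteq> (0, 0) \<and> (supnorm w < d \<or> supnorm (a_act s w) < d)"
proof -
  define t where "t = exp s"
  define X where "X = d\<^sup>2 * t * (3 - t)"
  have "1 \<le> t" "t \<le> 2" "2 < X"
    using assms by (simp_all add: t_def X_def)
  then obtain q where "2 / X < q" "q < 1"
    using dense[of "2 / X" 1] by auto
  have "0 < 2 / X"
    using \<open>2 < X\<close> by simp
  then have "0 < q" "2 < q * X"
    using \<open>2 / X < q\<close> by (linarith, simp add: divide_less_eq)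
  \<comment> \<open>\<open>\<theta> < 1\<close> makes the closed hexagon fit into the open boxes of short vectors.\<close>
  define \<theta> where "\<theta> = sqrt q"
  have "0 < \<theta>" "\<theta> < 1" "\<theta>\<^sup>2 = q"
    using \<open>0 < q\<close> \<open>q < 1\<close> by (simp_all add: \<theta>_def)
  define H where "H = hexagon (\<theta> * d) (\<theta> * d * t) (\<theta> * d * t * (2 - t))"
  have a: "0 < \<theta> * d" and h: "0 \<le> \<theta> * d * t * (2 - t)" "\<theta> * d * t * (2 - t) \<le> \<theta> * d * t"
    using \<open>0 < \<theta>\<close> \<open>0 < d\<close> \<open>1 \<le> t\<close> \<open>t \<le> 2\<close> by (simp_all add: mult_left_le)
  have "2 * (\<theta> * d) * (\<theta> * d * t + \<theta> * d * t * (2 - t)) = 2 * (\<theta>\<^sup>2 * X)"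
    by (simp add: X_def power2_eq_square algebra_simps)
  then have "4 < 2 * (\<theta> * d) * (\<theta> * d * t + \<theta> * d * t * (2 - t))"
    using \<open>2 < q * X\<close> \<open>\<theta>\<^sup>2 = q\<close> by simp
  also have "\<dots> \<le> measure lebesgue H"
    unfolding H_def using a h by (rule measure_hexagon_ge)
  finally obtain w where "w \<in> L" "w \<noteq> (0, 0)" and "vector [fst w, snd w] \<in> H"
    using unimodular_lattice_meets_convex_body[OF \<open>L \<in> unimodular_lattices\<close>, of H] a h
    by (auto simp: H_def convex_hexagon bounded_hexagon uminus_in_hexagon)
  moreover have "supnorm w < d \<or> supnorm (a_act s w) < d"
    using hexagon_short_or_flowed_short[OF \<open>0 < d\<close> \<open>0 \<le> s\<close> \<open>exp s \<le> 2\<close> \<open>0 < \<theta>\<close> \<open>\<theta> < 1\<close>,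
        of "vector [fst w, snd w]"]
      \<open>vector [fst w, snd w] \<in> H\<close> by (simp add: H_def t_def)
  ultimately show ?thesis
    by blast
qed

lemma swap_unimodular_lattice:
  assumes "L \<in> unimodular_lattices"
  shows "prod.swap ` L \<in> unimodular_lattices"
proof -
  obtain u v where L: "L = lattice_of u v" and det: "fst u * snd v - fst v * snd u = 1"
    using assms unfolding unimodular_lattices_def by blast
  have "prod.swap ` lattice_of u v = lattice_of (prod.swap v) (prod.swap u)"
    unfolding lattice_of_def by (auto simp: image_iff) (metis add.commute)+
  moreover have "fst (prod.swap v) * snd (prod.swap u) - fst (prod.swap u) * snd (prod.swap v) = 1"
    using det by (simp add: algebra_simps)
  ultimately show ?thesis
    unfolding L unimodular_lattices_def by blast
qed

lemma unimodular_lattice_short_or_flowed_short: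
  assumes "L \<in> unimodular_lattices" and "0 < d" and "exp \<bar>s\<bar> \<le> 2"
    and "2 < d\<^sup>2 * exp \<bar>s\<bar> * (3 - exp \<bar>s\<bar>)"
  shows "\<exists>w\<in>L. w \<noteq> (0, 0) \<and> (supnorm w < d \<or> supnorm (a_act s w) < d)"
proof (cases "0 \<le> s")
  case True
  then show ?thesis
    using unimodular_lattice_short_or_flowed_short_nonneg[of L d s] assms by simp
next
  case False
  then obtain w' where "w' \<in> prod.swap ` L" "w' \<noteq> (0, 0)"
    and short: "supnorm w' < d \<or> supnorm (a_act (- s) w') < d"
    using unimodular_lattice_short_or_flowed_short_nonneg[of "prod.swap ` L" d "- s"]
      swap_unimodular_lattice assms by auto
  then obtain w where "w \<in> L" "w' = prod.swap w"
    by blast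
  moreover have "supnorm (prod.swap w) = supnorm w" "supnorm (a_act (- s) (prod.swap w)) = supnorm (a_act s w)"
    by (simp_all add: supnorm_def a_act_def prod.swap_def max.commute)
  ultimately show ?thesis
    using \<open>w' \<noteq> (0, 0)\<close> short by (intro bexI[of _ w]) auto
qed

section \<open>Numerical estimates\<close>

lemma cube_mul_three_minus_cube_gt:
  fixes w :: real
  assumes "1 < w" "w < 10201/10000"
  shows "2 * w < w^3 * (3 - w^3)"
proof -
  have "w^4 \<le> (10201/10000)^4"
    using assms by (intro power_mono) auto
  also have "\<dots> < 4/3"
    by (simp add: eval_nat_numeral)
  finally have "w^4 < 4/3" .
  moreover have "w^2 \<le> w^4" "w^3 \<le> w^4"
    using assms by (auto intro: power_increasing)
  ultimately have "w^2 + w^3 + w^4 < 2 + 2 * w"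
    using assms by linarith
  then have "0 < (w - 1) * (2 + 2 * w - w^2 - w^3 - w^4)"
    using assms by (intro mult_pos_pos) auto
  then have "0 < w * ((w - 1) * (2 + 2 * w - w^2 - w^3 - w^4))"
    using assms by simp
  also have "\<dots> = w^3 * (3 - w^3) - 2 * w"
    by algebra
  finally show ?thesis
    by simp
qed

lemma mul_three_minus_gt:
  fixes w t :: real
  assumes "1 < w" "w < 10201/10000" "w^3 \<le> t" "t \<le> 19/10"
  shows "2 * w < t * (3 - t)"
proof (cases "t \<le> 3/2")
  case True
  have "w^3 \<le> (10201/10000)^3"
    using assms by (intro power_mono) auto
  then have "0 \<le> (t - w^3) * (3 - t - w^3)"
    using assms True by (intro mult_nonneg_nonneg) auto
  also have "\<dots> = t * (3 - t) - w^3 * (3 - w^3)"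
    by algebra
  finally show ?thesis
    using cube_mul_three_minus_cube_gt[OF assms(1,2)] by linarith
next
  case False
  then have "0 \<le> (19/10 - t) * (t - 11/10)"
    using assms by (intro mult_nonneg_nonneg) auto
  also have "\<dots> = t * (3 - t) - 209/100"
    by algebra
  finally show ?thesis
    using assms by linarith
qed

lemma flow_parameter_bounds:
  fixes r s :: real
  assumes "0 < r" and "r < ln (101 / 100)" and "6 * r \<le> \<bar>s\<bar>" and "\<bar>s\<bar> \<le> ln (19 / 10)"
  shows "exp \<bar>s\<bar> \<le> 2" and "2 < exp (- r) ^ 2 * exp \<bar>s\<bar> * (3 - exp \<bar>s\<bar>)"
proof -
  define w where "w = exp r ^ 2"
  have "exp \<bar>s\<bar> \<le> 19/10"
    using exp_mono[OF assms(4)] by simp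
  then show "exp \<bar>s\<bar> \<le> 2"
    by simp
  have "1 < w"
    using assms(1) by (simp add: w_def one_less_power)
  have "exp r < 101/100"
    using exp_less_mono[OF assms(2)] by simp
  then have "w < (101/100)^2"
    unfolding w_def by (intro power_strict_mono) auto
  then have "w < 10201/10000"
    by (simp add: power2_eq_square)
  have "w^3 = exp (6 * r)"
    by (simp add: w_def exp_of_nat_mult[symmetric] power_mult[symmetric])
  then have "w^3 \<le> exp \<bar>s\<bar>"
    using assms(3) by simp
  then have "2 * w < exp \<bar>s\<bar> * (3 - exp \<bar>s\<bar>)"
    using mul_three_minus_gt \<open>1 < w\<close> \<open>w < 10201/10000\<close> \<open>exp \<bar>s\<bar> \<le> 19/10\<close> by blast
  then have "exp (- r) ^ 2 * (2 * w) < exp (- r) ^ 2 * (exp \<bar>s\<bar> * (3 - exp \<bar>s\<bar>))"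
    by (simp add: mult_strict_left_mono)
  moreover have "exp (- r) ^ 2 * w = 1"
    by (simp add: w_def exp_minus power_mult_distrib[symmetric])
  ultimately show "2 < exp (- r) ^ 2 * exp \<bar>s\<bar> * (3 - exp \<bar>s\<bar>)"
    by (simp add: mult.assoc mult.left_commute)
qed

theorem lemma3p2:
  fixes r s :: real
  assumes "0 < r" and "r < ln (101 / 100)"
    and "6 * r \<le> \<bar>s\<bar>" and "\<bar>s\<bar> \<le> ln (19 / 10)"
  shows "(\<lambda>L. a_act s ` L) ` K r \<inter> K r = {}"
proof (rule equals0I)
  fix L' assume "L' \<in> (\<lambda>L. a_act s ` L) ` K r \<inter> K r"
  then obtain L where "L \<in> K r" and "a_act s ` L \<in> K r"
    by blast
  then obtain w where "w \<in> L" "w \<noteq> (0, 0)" and short: "supnorm w < exp (- r) \<or> supnorm (a_act s w) < exp (- r)"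
    using unimodular_lattice_short_or_flowed_short[of L "exp (- r)" s] flow_parameter_bounds[OF assms]
    by (auto simp: K_def)
  have "a_act s w \<noteq> (0, 0)"
    using \<open>w \<noteq> (0, 0)\<close> by (cases w) (simp add: a_act_def)
  then have "exp (- r) \<le> supnorm w" "exp (- r) \<le> supnorm (a_act s w)"
    using supnorm_ge_of_mem_K \<open>L \<in> K r\<close> \<open>a_act s ` L \<in> K r\<close> \<open>w \<in> L\<close> \<open>w \<noteq> (0, 0)\<close> by auto
  then show False
    using short by linarith
qed

end
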